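(* In the setting below, if a PHB $\mathbf{E}$ is $\Delta^-$-stable but $\Delta^+$-unstable, then every destabilizing subbundle of $\mathbf{E}$ has discrete data $S$.
   Context: Fix distinct $x_1,\dots,x_n\in\mathbb{C}\mathbb{P}^1$. Weights $\beta=(\beta_1(x_i),\beta_2(x_i))_i$ with $0\le\beta_1(x_i)<\beta_2(x_i)<1$ form the weight space $Q$; put $\alpha=\beta_2-\beta_1$ and $\varepsilon_T(\alpha)=\sum_{i\in T}\alpha_i-\sum_{i\notin T}\alpha_i$. Walls are the intersections of $Q$ with the hyperplanes $\varepsilon_T(\beta_2-\beta_1)=0$; chambers are the components of the complement. All PHBs here are rank-2 parabolic Higgs bundles $(E,\Phi)$ over $\mathbb{C}\mathbb{P}^1$ whose underlying holomorphic bundle is trivial, with fixed determinant and trace-free Higgs field: $E$ has a line $E_{x_i,2}\subset E_{x_i}$ at each $x_i$ with weights $\beta_1(x_i)<\beta_2(x_i)$, $\Phi$ is a meromorphic $\mathrm{End}_0(E)\otimes K_{\mathbb{C}\mathbb{P}^1}$-valued section with at most simple poles at the $x_i$ whose residue maps $E_{x_i}$ into $E_{x_i,2}$ and kills $E_{x_i,2}$. A parabolic line subbundle $L$ (necessarily holomorphically trivial) gets weight $\beta_2(x_i)$ at $x_i$ if $L_{x_i}=E_{x_i,2}$ and $\beta_1(x_i)$ otherwise; its discrete data is $S_L=\{i: L_{x_i}=E_{x_i,2}\}$. $(E,\Phi)$ is stable for $\beta$ iff every $\Phi$-invariant line subbundle $L$ satisfies $\varepsilon_{S_L}(\beta_2-\beta_1)<0$.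 Fix a point of $Q$ lying on exactly one wall $W$; a small neighborhood meets two chambers $\Delta^+,\Delta^-$; let $S$ be the index set defining $W$, chosen (replacing $S$ by $S^c$ if needed) so that $\varepsilon_S(\beta_2-\beta_1)>0$ for $\beta\in\Delta^+$. $\Delta^\pm$-stable means stable for weights in $\Delta^\pm$. If $\mathbf{E}$ is $\Delta^-$-stable but $\Delta^+$-unstable, a destabilizing subbundle is a $\Phi$-invariant parabolic line subbundle for which the stability inequality holds in $\Delta^-$ and fails in $\Delta^+$. *)

theory Defs
  imports "HOL-Analysis.Analysis"
begin

text \<open>Vectors of the fibre C^2 of the trivial rank-2 bundle are pairs of complex numbers.
  Two vectors are parallel iff they are linearly dependent (the zero vector is parallel to all).\<close>
definition parallel :: "complex \<times> complex \<Rightarrow> complex \<times> complex \<Rightarrow> bool" where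
  "parallel v w \<longleftrightarrow> fst v * snd w = snd v * fst w"

text \<open>A trace-free 2x2 matrix [[a,b],[c,-a]] is encoded as the triple (a,b,c).\<close>
definition happ :: "complex \<times> complex \<times> complex \<Rightarrow> complex \<times> complex \<Rightarrow> complex \<times> complex" where
  "happ m v = (case m of (a, b, c) \<Rightarrow> case v of (v1, v2) \<Rightarrow> (a * v1 + b * v2, c * v1 - a * v2))"

definition holo_ext_at :: "(complex \<Rightarrow> complex) \<Rightarrow> complex \<Rightarrow> bool" where
  "holo_ext_at f p \<longleftrightarrow> (\<exists>r>0. \<exists>h. h holomorphic_on ball p r \<and> (\<forall>z\<in>ball p r - {p}. f z = h z))"

text \<open>Points of CP^1 are \<open>complex option\<close>: \<open>Some z\<close> in the affine chart, \<open>None\<close> = infinity.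
  Finite marked points:\<close>
definition fin_marked :: "('i \<Rightarrow> complex option) \<Rightarrow> complex set" where
  "fin_marked x = {p. \<exists>i. x i = Some p}"

text \<open>A coefficient f of the form f(z) dz is meromorphic on CP^1, holomorphic away from the
  marked points, with at most simple poles at the marked points (chart w = 1/z at infinity,
  where f(z) dz = - f(1/w) w^-2 dw).\<close>
definition entry_ok :: "('i \<Rightarrow> complex option) \<Rightarrow> (complex \<Rightarrow> complex) \<Rightarrow> bool" where
  "entry_ok x f \<longleftrightarrow>
     f holomorphic_on (- fin_marked x) \<and>
     (\<forall>p\<in>fin_marked x. holo_ext_at (\<lambda>z. (z - p) * f z) p) \<and>
     (if (\<exists>i. x i = None) then holo_ext_at (\<lambda>w. f (1 / w) / w) 0
      else holo_ext_at (\<lambda>w. f (1 / w) / w\<^sup>2) 0)"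

text \<open>Residue of the form f(z) dz at a point of CP^1 (for at most simple poles).\<close>
definition res_at :: "complex option \<Rightarrow> (complex \<Rightarrow> complex) \<Rightarrow> complex" where
  "res_at q f = (case q of Some p \<Rightarrow> Lim (at p) (\<lambda>z. (z - p) * f z)
                          | None \<Rightarrow> - Lim at_infinity (\<lambda>z. z * f z))"

text \<open>Higgs field \<Phi> = M(z) dz with M(z) = [[a z, b z],[c z, - a z]], encoded by
  \<Phi> z = (a z, b z, c z).\<close>
definition ent_a :: "(complex \<Rightarrow> complex \<times> complex \<times> complex) \<Rightarrow> complex \<Rightarrow> complex" where
  "ent_a \<Phi> z = fst (\<Phi> z)"
definition ent_b :: "(complex \<Rightarrow> complex \<times> complex \<times> complex) \<Rightarrow> complex \<Rightarrow> complex" where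
  "ent_b \<Phi> z = fst (snd (\<Phi> z))"
definition ent_c :: "(complex \<Rightarrow> complex \<times> complex \<times> complex) \<Rightarrow> complex \<Rightarrow> complex" where
  "ent_c \<Phi> z = snd (snd (\<Phi> z))"

definition residue_mat :: "complex option \<Rightarrow> (complex \<Rightarrow> complex \<times> complex \<times> complex)
    \<Rightarrow> complex \<times> complex \<times> complex" where
  "residue_mat q \<Phi> = (res_at q (ent_a \<Phi>), res_at q (ent_b \<Phi>), res_at q (ent_c \<Phi>))"

text \<open>Rank-2 parabolic Higgs bundle on CP^1 with trivial underlying bundle: marked points x
  (distinct), flag lines E_{x_i,2} = span (F i), trace-free Higgs field \<Phi> with at most simple
  poles at the x_i whose residue maps E_{x_i} into E_{x_i,2} and kills E_{x_i,2}.\<close>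
definition is_PHB :: "('i \<Rightarrow> complex option) \<Rightarrow> ('i \<Rightarrow> complex \<times> complex)
    \<Rightarrow> (complex \<Rightarrow> complex \<times> complex \<times> complex) \<Rightarrow> bool" where
  "is_PHB x F \<Phi> \<longleftrightarrow> inj x \<and> (\<forall>i. F i \<noteq> 0) \<and>
     entry_ok x (ent_a \<Phi>) \<and> entry_ok x (ent_b \<Phi>) \<and> entry_ok x (ent_c \<Phi>) \<and>
     (\<forall>i. happ (residue_mat (x i) \<Phi>) (F i) = 0 \<and>
          (\<forall>v. parallel (happ (residue_mat (x i) \<Phi>) v) (F i)))"

text \<open>The (holomorphically trivial) line subbundle L spanned by the constant vector u \<noteq> 0
  is \<Phi>-invariant.\<close>
definition invariant :: "('i \<Rightarrow> complex option) \<Rightarrow> (complex \<Rightarrow> complex \<times> complex \<times> complex)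
    \<Rightarrow> complex \<times> complex \<Rightarrow> bool" where
  "invariant x \<Phi> u \<longleftrightarrow> (\<forall>z. z \<notin> fin_marked x \<longrightarrow> parallel (happ (\<Phi> z) u) u)"

definition disc_data :: "('i \<Rightarrow> complex \<times> complex) \<Rightarrow> complex \<times> complex \<Rightarrow> 'i set" where
  "disc_data F u = {i. parallel u (F i)}"

text \<open>Weights: \<beta> i = (\<beta>1(x_i), \<beta>2(x_i)).\<close>
definition weight_space :: "('i \<Rightarrow> real \<times> real) set" where
  "weight_space = {\<beta>. \<forall>i. 0 \<le> fst (\<beta> i) \<and> fst (\<beta> i) < snd (\<beta> i) \<and> snd (\<beta> i) < 1}"

definition alpha :: "('i \<Rightarrow> real \<times> real) \<Rightarrow> 'i \<Rightarrow> real" where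
  "alpha \<beta> i = snd (\<beta> i) - fst (\<beta> i)"

definition eps :: "'i::finite set \<Rightarrow> ('i \<Rightarrow> real) \<Rightarrow> real" where
  "eps T a = (\<Sum>i\<in>T. a i) - (\<Sum>i\<in>- T. a i)"

definition wall :: "'i::finite set \<Rightarrow> ('i \<Rightarrow> real \<times> real) set" where
  "wall T = weight_space \<inter> {\<beta>. eps T (alpha \<beta>) = 0}"

definition walls :: "('i::finite \<Rightarrow> real \<times> real) set set" where
  "walls = range wall"

definition chamber :: "('i::finite \<Rightarrow> real \<times> real) set \<Rightarrow> bool" where
  "chamber D \<longleftrightarrow> (\<exists>\<beta>\<in>weight_space - \<Union>walls.
                     D = connected_component_set (weight_space - \<Union>walls) \<beta>)"

definition stable :: "('i::finite \<Rightarrow> complex option) \<Rightarrow> ('i \<Rightarrow> complex \<times> complex)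
    \<Rightarrow> (complex \<Rightarrow> complex \<times> complex \<times> complex) \<Rightarrow> ('i \<Rightarrow> real \<times> real) \<Rightarrow> bool" where
  "stable x F \<Phi> \<beta> \<longleftrightarrow>
     (\<forall>u. u \<noteq> 0 \<longrightarrow> invariant x \<Phi> u \<longrightarrow> eps (disc_data F u) (alpha \<beta>) < 0)"

definition stable_on :: "('i::finite \<Rightarrow> complex option) \<Rightarrow> ('i \<Rightarrow> complex \<times> complex)
    \<Rightarrow> (complex \<Rightarrow> complex \<times> complex \<times> complex) \<Rightarrow> ('i \<Rightarrow> real \<times> real) set \<Rightarrow> bool" where
  "stable_on x F \<Phi> D \<longleftrightarrow> (\<forall>\<beta>\<in>D. stable x F \<Phi> \<beta>)"

definition destabilizing :: "('i::finite \<Rightarrow> complex option) \<Rightarrow> ('i \<Rightarrow> complex \<times> complex)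
    \<Rightarrow> (complex \<Rightarrow> complex \<times> complex \<times> complex) \<Rightarrow> ('i \<Rightarrow> real \<times> real) set
    \<Rightarrow> ('i \<Rightarrow> real \<times> real) set \<Rightarrow> complex \<times> complex \<Rightarrow> bool" where
  "destabilizing x F \<Phi> Dm Dp u \<longleftrightarrow> u \<noteq> 0 \<and> invariant x \<Phi> u \<and>
     (\<forall>\<beta>\<in>Dm. eps (disc_data F u) (alpha \<beta>) < 0) \<and>
     (\<forall>\<beta>\<in>Dp. \<not> eps (disc_data F u) (alpha \<beta>) < 0)"

end

theory Submission
  imports Defs
begin

text \<open>A destabilizing line \<open>L\<close> has \<open>\<epsilon>\<^bsub>S\<^sub>L\<^esub>(\<alpha>) < 0\<close> on \<open>\<Delta>\<^sup>-\<close> and \<open>\<ge> 0\<close> on \<open>\<Delta>\<^sup>+\<close>, so by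
  continuity \<open>\<epsilon>\<^bsub>S\<^sub>L\<^esub>(\<alpha>)\<close> vanishes at the common boundary point \<open>\<beta>\<^sub>0\<close>, i.e. \<open>\<beta>\<^sub>0\<close> lies on the
  wall of \<open>S\<^sub>L\<close>. As \<open>\<beta>\<^sub>0\<close> lies on a single wall, that wall is the wall of \<open>S\<close>. Two index sets
  define the same wall only if they agree up to complement: otherwise a perturbation of
  \<open>\<beta>\<^sub>0\<close> along two coordinates, chosen to keep \<open>\<epsilon>\<^sub>S\<close> fixed, moves \<open>\<epsilon>\<^bsub>S\<^sub>L\<^esub>\<close>. Finally \<open>S\<^sub>L = S\<^sup>c\<close>
  is ruled out by the signs on \<open>\<Delta>\<^sup>+\<close>.\<close>

lemma eps_Compl: "eps (- T) a = - eps T a"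
  by (simp add: eps_def)

lemma eps_add: "eps T (\<lambda>k. a k + b k) = eps T a + eps T b"
  by (simp add: eps_def sum.distrib)

lemma eps_single:
  fixes T :: "'i::finite set"
  shows "eps T (\<lambda>k. if k = i then c else 0) = (if i \<in> T then c else - c)"
  by (auto simp: eps_def sum.delta' if_distrib[of uminus] cong: if_cong)

lemma continuous_on_eps_alpha:
  fixes T :: "'i::finite set"
  shows "continuous_on A (\<lambda>\<beta>::'i \<Rightarrow> real \<times> real. eps T (alpha \<beta>))"
proof -
  have "continuous_on UNIV (\<lambda>\<beta>::'i \<Rightarrow> real \<times> real. alpha \<beta> k)" for k
    unfolding alpha_def
    by (intro continuous_intros continuous_on_compose2[OF _ continuous_on_product_coordinates]) auto
  then have "continuous_on UNIV (\<lambda>\<beta>::'i \<Rightarrow> real \<times> real. eps T (alpha \<beta>))"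
    unfolding eps_def by (intro continuous_intros)
  then show ?thesis
    by (rule continuous_on_subset) simp
qed

lemma weight_space_perturb_snd:
  fixes \<beta> :: "'i::finite \<Rightarrow> real \<times> real"
  assumes "\<beta> \<in> weight_space"
  obtains e where "e > 0"
    and "\<And>d. (\<And>k. \<bar>d k\<bar> < e) \<Longrightarrow> (\<lambda>k. (fst (\<beta> k), snd (\<beta> k) + d k)) \<in> weight_space"
proof
  define margin where "margin k = min (snd (\<beta> k) - fst (\<beta> k)) (1 - snd (\<beta> k))" for k
  have margin_pos: "margin k > 0" for k
    using assms by (auto simp: margin_def weight_space_def)
  show "Min (range margin) > 0"
    using margin_pos by simp
  fix d :: "'i \<Rightarrow> real"
  assume "\<And>k. \<bar>d k\<bar> < Min (range margin)"
  moreover have "Min (range margin) \<le> margin k" for k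
    by simp
  ultimately have "\<bar>d k\<bar> < margin k" for k
    using less_le_trans by blast
  then have "\<bar>d k\<bar> < snd (\<beta> k) - fst (\<beta> k)" "\<bar>d k\<bar> < 1 - snd (\<beta> k)" for k
    by (simp_all add: margin_def)
  moreover have "0 \<le> fst (\<beta> k)" for k
    using assms by (simp add: weight_space_def)
  ultimately show "(\<lambda>k. (fst (\<beta> k), snd (\<beta> k) + d k)) \<in> weight_space"
    unfolding weight_space_def by (simp add: abs_less_iff) (smt (verit))
qed

lemma wall_eq_imp_eq_or_Compl:
  fixes S T :: "'i::finite set"
  assumes on_wall: "\<beta> \<in> wall S" and same_wall: "wall T = wall S"
  shows "T = S \<or> T = - S"
proof (rule ccontr)
  assume "\<not> (T = S \<or> T = - S)"
  then obtain i j where i: "(i \<in> T) \<noteq> (i \<in> S)" and j: "(j \<in> T) = (j \<in> S)"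
    by blast
  obtain e where "e > 0"
    and perturb: "\<And>d. (\<And>k. \<bar>d k\<bar> < e) \<Longrightarrow> (\<lambda>k. (fst (\<beta> k), snd (\<beta> k) + d k)) \<in> weight_space"
    using on_wall weight_space_perturb_snd unfolding wall_def by blast
  define \<delta> where "\<delta> = e / 2"
  define s where "s k = (if k \<in> S then 1 else - 1 :: real)" for k
  define di where "di k = (if k = i then \<delta> * s i else 0)" for k
  define dj where "dj k = (if k = j then - \<delta> * s j else 0)" for k
  define \<beta>' where "\<beta>' k = (fst (\<beta> k), snd (\<beta> k) + (di k + dj k))" for k
  have "i \<noteq> j"
    using i j by blast
  then have "\<bar>di k + dj k\<bar> < e" for k
    using \<open>e > 0\<close> by (auto simp: di_def dj_def s_def \<delta>_def)
  then have "\<beta>' \<in> weight_space"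
    unfolding \<beta>'_def by (rule perturb)
  have alpha': "alpha \<beta>' = (\<lambda>k. alpha \<beta> k + (di k + dj k))"
    by (auto simp: alpha_def \<beta>'_def)
  have eps_shift: "eps X (alpha \<beta>') = eps X (alpha \<beta>) + eps X di + eps X dj" for X
    unfolding alpha' eps_add by simp
  \<comment> \<open>the two shifts cancel in \<open>\<epsilon>\<^sub>S\<close> but add up in \<open>\<epsilon>\<^sub>T\<close>\<close>
  have "eps S (alpha \<beta>') = 0"
    using on_wall eps_shift[of S] unfolding di_def dj_def
    by (simp add: eps_single wall_def s_def)
  with \<open>\<beta>' \<in> weight_space\<close> have "\<beta>' \<in> wall T"
    using same_wall by (simp add: wall_def)
  then have "eps T (alpha \<beta>') = 0"
    by (simp add: wall_def)
  moreover have "eps T (alpha \<beta>') = - 2 * \<delta>"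
    using on_wall same_wall eps_shift[of T] i j unfolding di_def dj_def
    by (auto simp: eps_single wall_def s_def)
  ultimately show False
    using \<open>e > 0\<close> by (simp add: \<delta>_def)
qed

theorem mainTheorem5:
  fixes x :: "'i::finite \<Rightarrow> complex option"
    and F :: "'i \<Rightarrow> complex \<times> complex"
    and \<Phi> :: "complex \<Rightarrow> complex \<times> complex \<times> complex"
    and \<beta>0 :: "'i \<Rightarrow> real \<times> real"
    and Dp Dm :: "('i \<Rightarrow> real \<times> real) set"
    and S :: "'i set"
    and u :: "complex \<times> complex"
  assumes PHB: "is_PHB x F \<Phi>"
    and beta0: "\<beta>0 \<in> weight_space"
    and one_wall: "\<exists>!W. W \<in> walls \<and> \<beta>0 \<in> W"
    and on_S: "\<beta>0 \<in> wall S"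
    and ch_p: "chamber Dp" and ch_m: "chamber Dm" and distinct: "Dp \<noteq> Dm"
    and adj_p: "\<beta>0 \<in> closure Dp" and adj_m: "\<beta>0 \<in> closure Dm"
    and S_pos: "\<forall>\<beta>\<in>Dp. eps S (alpha \<beta>) > 0"
    and stab_m: "stable_on x F \<Phi> Dm"
    and unstab_p: "\<not> stable_on x F \<Phi> Dp"
    and destab: "destabilizing x F \<Phi> Dm Dp u"
  shows "disc_data F u = S"
proof -
  define T where "T = disc_data F u"
  have neg_m: "\<And>\<beta>. \<beta> \<in> Dm \<Longrightarrow> eps T (alpha \<beta>) \<le> 0"
    and nonneg_p: "\<And>\<beta>. \<beta> \<in> Dp \<Longrightarrow> 0 \<le> eps T (alpha \<beta>)"
    using destab unfolding destabilizing_def T_def by force+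
  have "eps T (alpha \<beta>0) = 0"
    using continuous_le_on_closure[OF continuous_on_eps_alpha adj_m neg_m]
      continuous_ge_on_closure[OF continuous_on_eps_alpha adj_p nonneg_p] by simp
  with beta0 have "\<beta>0 \<in> wall T"
    by (simp add: wall_def)
  with one_wall on_S have "wall T = wall S"
    unfolding walls_def by blast
  then have "T = S \<or> T = - S"
    using on_S by (rule wall_eq_imp_eq_or_Compl[rotated])
  moreover obtain b where "b \<in> Dp"
    using adj_p closure_empty by (metis empty_iff ex_in_conv)
  then have "T \<noteq> - S"
    using nonneg_p S_pos eps_Compl[of S] by fastforce
  ultimately show ?thesis
    unfolding T_def by blast
qed

end
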